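(* For every integer $k\ge 3$, $M_k(3)\ge \frac{3}{4}\,2^k+2$.
   Context: All graphs are finite and simple. A path $v_1,\ldots,v_r$ in a graph $G$ is degree-monotone if $\deg_G(v_1)\le\cdots\le\deg_G(v_r)$; its order is $r$. Let $mp(G)$ be the maximum order of a degree-monotone path in $G$. For a $k$-edge-coloring of $K_n$ with colors $1,\ldots,k$, let $G_j$ be the spanning subgraph consisting of the edges colored $j$ (degrees taken in $G_j$). $M_k(m)$ is the minimum integer $M$ such that for every $n\ge M$ and every $k$-edge-coloring of $K_n$ there is some $j$ with $mp(G_j)\ge m$. *)

theory Defs
  imports Complex_Main
begin

text \<open>A finite simple graph is given by a finite vertex set V and a symmetric,
irreflexive adjacency relation E (only its restriction to V matters).\<close>

definition gdeg :: "'a set \<Rightarrow> ('a \<Rightarrow> 'a \<Rightarrow> bool) \<Rightarrow> 'a \<Rightarrow> nat" where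
  "gdeg V E v = card {w \<in> V. E v w}"

definition is_path :: "'a set \<Rightarrow> ('a \<Rightarrow> 'a \<Rightarrow> bool) \<Rightarrow> 'a list \<Rightarrow> bool" where
  "is_path V E p \<longleftrightarrow> p \<noteq> [] \<and> distinct p \<and> set p \<subseteq> V \<and>
     (\<forall>i. Suc i < length p \<longrightarrow> E (p ! i) (p ! Suc i))"

definition deg_monotone_path :: "'a set \<Rightarrow> ('a \<Rightarrow> 'a \<Rightarrow> bool) \<Rightarrow> 'a list \<Rightarrow> bool" where
  "deg_monotone_path V E p \<longleftrightarrow> is_path V E p \<and> sorted (map (gdeg V E) p)"

definition mp :: "'a set \<Rightarrow> ('a \<Rightarrow> 'a \<Rightarrow> bool) \<Rightarrow> nat" where
  "mp V E = Max (insert 0 {length p | p. deg_monotone_path V E p})"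

text \<open>K_n on vertex set {0..<n}; a k-edge-colouring with colours 1..k is a symmetric
function on pairs of distinct vertices with values in {1..k}.\<close>
definition edge_coloring :: "nat \<Rightarrow> nat \<Rightarrow> (nat \<Rightarrow> nat \<Rightarrow> nat) \<Rightarrow> bool" where
  "edge_coloring k n c \<longleftrightarrow>
     (\<forall>u<n. \<forall>v<n. u \<noteq> v \<longrightarrow> c u v = c v u \<and> c u v \<in> {1..k})"

definition color_class :: "nat \<Rightarrow> (nat \<Rightarrow> nat \<Rightarrow> nat) \<Rightarrow> nat \<Rightarrow> nat \<Rightarrow> nat \<Rightarrow> bool" where
  "color_class n c j u v \<longleftrightarrow> u < n \<and> v < n \<and> u \<noteq> v \<and> c u v = j"

text \<open>M is admissible for (k,m): for every n \<ge> M and every k-edge-colouring of K_n,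
some colour class has mp \<ge> m. M_k(m) is the least admissible M.\<close>
definition admissible :: "nat \<Rightarrow> nat \<Rightarrow> nat \<Rightarrow> bool" where
  "admissible k m M \<longleftrightarrow>
     (\<forall>n\<ge>M. \<forall>c. edge_coloring k n c \<longrightarrow>
        (\<exists>j\<in>{1..k}. mp {0..<n} (color_class n c j) \<ge> m))"

end

theory Submission
  imports Defs
begin

text \<open>It suffices to colour K_n with k colours so that no colour class contains a path u, v, w
with deg u \<le> deg v \<le> deg w: then no colour class has a degree-monotone path of order 3, so
M_k(3) > n. For three colours explicit colourings of K_6 and K_7 exist. Given such k-colourings
of K_a and K_b with a \<noteq> b, colour all edges between the two cliques with a new colour: that colour
class is K_{a,b}, in which every path of order 3 has degree sequence a, b, a or b, a, b, while the
old colour classes keep their degrees. Joining K_{6 2^m + 1} with a smaller clique in this way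
gives n = 6 2^m + 1 = 3/4 2^k + 1 for k = m + 3 colours.\<close>

definition color_deg :: "nat \<Rightarrow> (nat \<Rightarrow> nat \<Rightarrow> nat) \<Rightarrow> nat \<Rightarrow> nat \<Rightarrow> nat" where
  "color_deg n c j x = card {y \<in> {0..<n}. y \<noteq> x \<and> c x y = j}"

definition monotone_P3_free :: "nat \<Rightarrow> (nat \<Rightarrow> nat \<Rightarrow> nat) \<Rightarrow> bool" where
  "monotone_P3_free n c \<longleftrightarrow>
     (\<forall>u<n. \<forall>v<n. \<forall>w<n. u \<noteq> v \<longrightarrow> v \<noteq> w \<longrightarrow> u \<noteq> w \<longrightarrow> c u v = c v w \<longrightarrow>
        \<not> (color_deg n c (c u v) u \<le> color_deg n c (c u v) v \<and>
           color_deg n c (c u v) v \<le> color_deg n c (c u v) w))"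

definition monotone_P3_free_colorable :: "nat \<Rightarrow> nat \<Rightarrow> bool" where
  "monotone_P3_free_colorable k n \<longleftrightarrow> (\<exists>c. edge_coloring k n c \<and> monotone_P3_free n c)"

lemma gdeg_color_class:
  "x < n \<Longrightarrow> gdeg {0..<n} (color_class n c j) x = color_deg n c j x"
  unfolding gdeg_def color_deg_def color_class_def by (rule arg_cong[where f = card]) auto

lemma edge_coloring_mono: "edge_coloring k n c \<Longrightarrow> k \<le> k' \<Longrightarrow> edge_coloring k' n c"
  unfolding edge_coloring_def by fastforce

lemma edge_coloring_neq_Suc:
  assumes "edge_coloring k n c" "u < n" "v < n" "u \<noteq> v"
  shows "c u v \<noteq> Suc k"
proof -
  have "c u v \<in> {1..k}" using assms unfolding edge_coloring_def by blast
  then show ?thesis by simp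
qed

lemma monotone_P3_free_colorable_mono:
  "monotone_P3_free_colorable k n \<Longrightarrow> k \<le> k' \<Longrightarrow> monotone_P3_free_colorable k' n"
  unfolding monotone_P3_free_colorable_def using edge_coloring_mono by blast

subsection \<open>Degree-monotone paths of order three\<close>

lemma mp_le_imp_deg_monotone_path:
  assumes "finite V" "m \<le> mp V E" "0 < m"
  obtains p where "deg_monotone_path V E p" "m \<le> length p"
proof -
  let ?S = "{length p | p. deg_monotone_path V E p}"
  have "?S \<subseteq> {..card V}"
  proof
    fix l assume "l \<in> ?S"
    then obtain p where "l = length p" "distinct p" "set p \<subseteq> V"
      unfolding deg_monotone_path_def is_path_def by blast
    then have "l = card (set p)" "card (set p) \<le> card V"
      using assms(1) card_mono[of V "set p"] distinct_card[of p] by simp_all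
    then show "l \<in> {..card V}" by simp
  qed
  then have "finite ?S" by (rule finite_subset) simp
  then have "mp V E \<in> insert 0 ?S" unfolding mp_def by (intro Max_in) auto
  moreover have "mp V E \<noteq> 0" using assms(2,3) by linarith
  ultimately obtain p where "deg_monotone_path V E p" "length p = mp V E" by auto
  then show ?thesis using that assms(2) by simp
qed

lemma deg_monotone_path_triple:
  assumes "deg_monotone_path V E p" "3 \<le> length p"
  obtains u v w where "u \<in> V" "v \<in> V" "w \<in> V" "u \<noteq> v" "v \<noteq> w" "u \<noteq> w"
    "E u v" "E v w" "gdeg V E u \<le> gdeg V E v" "gdeg V E v \<le> gdeg V E w"
proof -
  obtain u v w rest where p: "p = u # v # w # rest"
    using assms(2) by (metis Suc_le_length_iff numeral_3_eq_3)
  have path: "distinct p" "set p \<subseteq> V" "\<And>i. Suc i < length p \<Longrightarrow> E (p ! i) (p ! Suc i)"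
    and sorted: "sorted (map (gdeg V E) p)"
    using assms(1) unfolding deg_monotone_path_def is_path_def by auto
  have "u \<in> V" "v \<in> V" "w \<in> V" "u \<noteq> v" "v \<noteq> w" "u \<noteq> w"
    using path(1,2) by (auto simp: p)
  moreover have "E u v" "E v w" using path(3)[of 0] path(3)[of 1] by (simp_all add: p)
  moreover have "gdeg V E u \<le> gdeg V E v" "gdeg V E v \<le> gdeg V E w"
    using sorted by (simp_all add: p)
  ultimately show ?thesis by (rule that)
qed

lemma mp_color_class_less_3:
  assumes "monotone_P3_free n c"
  shows "mp {0..<n} (color_class n c j) < 3"
proof (rule ccontr)
  let ?E = "color_class n c j"
  assume "\<not> ?thesis"
  then have "3 \<le> mp {0..<n} ?E" by simp
  then obtain p where "deg_monotone_path {0..<n} ?E p" "3 \<le> length p"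
    by (rule mp_le_imp_deg_monotone_path[OF finite_atLeastLessThan]) simp
  then obtain u v w where in_range: "u < n" "v < n" "w < n" and distinct: "u \<noteq> v" "v \<noteq> w" "u \<noteq> w"
    and edges: "?E u v" "?E v w"
    and sorted: "gdeg {0..<n} ?E u \<le> gdeg {0..<n} ?E v" "gdeg {0..<n} ?E v \<le> gdeg {0..<n} ?E w"
    by (rule deg_monotone_path_triple) auto
  have "c u v = j" "c v w = j" using edges unfolding color_class_def by auto
  moreover have "color_deg n c j u \<le> color_deg n c j v" "color_deg n c j v \<le> color_deg n c j w"
    using sorted in_range by (simp_all add: gdeg_color_class)
  ultimately show False
    using assms[unfolded monotone_P3_free_def, rule_format, OF in_range distinct] by simp
qed

lemma admissible_gt_monotone_P3_free_colorable:
  assumes "admissible k 3 M" "monotone_P3_free_colorable k n"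
  shows "n < M"
proof (rule ccontr)
  assume "\<not> n < M"
  obtain c where "edge_coloring k n c" "monotone_P3_free n c"
    using assms(2) unfolding monotone_P3_free_colorable_def by blast
  then show False
    using assms(1) \<open>\<not> n < M\<close> mp_color_class_less_3 unfolding admissible_def
    by (meson not_le not_less)
qed

subsection \<open>Joining two colourings by a new colour\<close>

definition join_coloring ::
  "nat \<Rightarrow> (nat \<Rightarrow> nat \<Rightarrow> nat) \<Rightarrow> (nat \<Rightarrow> nat \<Rightarrow> nat) \<Rightarrow> nat \<Rightarrow> nat \<Rightarrow> nat \<Rightarrow> nat" where
  "join_coloring a c1 c2 j u v =
     (if u < a \<and> v < a then c1 u v else if a \<le> u \<and> a \<le> v then c2 (u - a) (v - a) else j)"

lemma edge_coloring_join:
  assumes "edge_coloring k a c1" "edge_coloring k b c2"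
  shows "edge_coloring (Suc k) (a + b) (join_coloring a c1 c2 (Suc k))"
  unfolding edge_coloring_def
proof (intro allI impI)
  fix u v assume uv: "u < a + b" "v < a + b" "u \<noteq> v"
  consider "u < a" "v < a" | "a \<le> u" "a \<le> v" | "\<not> (u < a \<longleftrightarrow> v < a)" by linarith
  then show "join_coloring a c1 c2 (Suc k) u v = join_coloring a c1 c2 (Suc k) v u \<and>
      join_coloring a c1 c2 (Suc k) u v \<in> {1..Suc k}"
  proof cases
    case 1
    then have "c1 u v = c1 v u \<and> c1 u v \<in> {1..k}" using assms(1) uv unfolding edge_coloring_def by blast
    with 1 show ?thesis by (simp add: join_coloring_def)
  next
    case 2
    then have "u - a < b" "v - a < b" "u - a \<noteq> v - a" using uv by auto
    then have "c2 (u - a) (v - a) = c2 (v - a) (u - a) \<and> c2 (u - a) (v - a) \<in> {1..k}"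
      using assms(2) unfolding edge_coloring_def by blast
    with 2 show ?thesis by (simp add: join_coloring_def)
  qed (auto simp: join_coloring_def)
qed

lemma color_deg_join_left:
  assumes "x < a" "j \<noteq> j\<^sub>0"
  shows "color_deg (a + b) (join_coloring a c1 c2 j\<^sub>0) j x = color_deg a c1 j x"
  unfolding color_deg_def by (rule arg_cong[where f = card]) (use assms in \<open>auto simp: join_coloring_def\<close>)

lemma color_deg_join_right:
  assumes "a \<le> x" "j \<noteq> j\<^sub>0"
  shows "color_deg (a + b) (join_coloring a c1 c2 j\<^sub>0) j x = color_deg b c2 j (x - a)"
proof -
  have "{y \<in> {0..<a + b}. y \<noteq> x \<and> join_coloring a c1 c2 j\<^sub>0 x y = j}
      = (\<lambda>z. z + a) ` {z \<in> {0..<b}. z \<noteq> x - a \<and> c2 (x - a) z = j}"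
  proof (intro set_eqI iffI)
    fix y assume y: "y \<in> {y \<in> {0..<a + b}. y \<noteq> x \<and> join_coloring a c1 c2 j\<^sub>0 x y = j}"
    then have "a \<le> y" using assms by (auto simp: join_coloring_def split: if_splits)
    then show "y \<in> (\<lambda>z. z + a) ` {z \<in> {0..<b}. z \<noteq> x - a \<and> c2 (x - a) z = j}"
      using y assms by (intro image_eqI[of y _ "y - a"]) (auto simp: join_coloring_def)
  next
    fix y assume "y \<in> (\<lambda>z. z + a) ` {z \<in> {0..<b}. z \<noteq> x - a \<and> c2 (x - a) z = j}"
    then obtain z where "y = z + a" "z < b" "z \<noteq> x - a" "c2 (x - a) z = j" by auto
    then show "y \<in> {y \<in> {0..<a + b}. y \<noteq> x \<and> join_coloring a c1 c2 j\<^sub>0 x y = j}"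
      using assms(1) by (auto simp: join_coloring_def)
  qed
  then show ?thesis unfolding color_deg_def by (simp add: card_image)
qed

lemma color_deg_join_new_left:
  assumes "edge_coloring k a c1" "x < a"
  shows "color_deg (a + b) (join_coloring a c1 c2 (Suc k)) (Suc k) x = b"
proof -
  have "{y \<in> {0..<a + b}. y \<noteq> x \<and> join_coloring a c1 c2 (Suc k) x y = Suc k} = {a..<a + b}"
  proof (intro set_eqI iffI)
    fix y assume y: "y \<in> {y \<in> {0..<a + b}. y \<noteq> x \<and> join_coloring a c1 c2 (Suc k) x y = Suc k}"
    have "\<not> y < a"
    proof
      assume "y < a"
      then have "c1 x y = Suc k" "x \<noteq> y" using y assms(2) by (auto simp: join_coloring_def)
      then show False using edge_coloring_neq_Suc[OF assms(1,2) \<open>y < a\<close>] by simp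
    qed
    then show "y \<in> {a..<a + b}" using y by simp
  next
    fix y assume "y \<in> {a..<a + b}"
    then show "y \<in> {y \<in> {0..<a + b}. y \<noteq> x \<and> join_coloring a c1 c2 (Suc k) x y = Suc k}"
      using assms(2) by (simp add: join_coloring_def)
  qed
  then show ?thesis unfolding color_deg_def by simp
qed

lemma color_deg_join_new_right:
  assumes "edge_coloring k b c2" "a \<le> x" "x < a + b"
  shows "color_deg (a + b) (join_coloring a c1 c2 (Suc k)) (Suc k) x = a"
proof -
  have "{y \<in> {0..<a + b}. y \<noteq> x \<and> join_coloring a c1 c2 (Suc k) x y = Suc k} = {0..<a}"
  proof (intro set_eqI iffI)
    fix y assume y: "y \<in> {y \<in> {0..<a + b}. y \<noteq> x \<and> join_coloring a c1 c2 (Suc k) x y = Suc k}"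
    have "\<not> a \<le> y"
    proof
      assume "a \<le> y"
      then have "c2 (x - a) (y - a) = Suc k" "x - a \<noteq> y - a" "x - a < b" "y - a < b"
        using y assms(2,3) by (auto simp: join_coloring_def)
      then show False using edge_coloring_neq_Suc[OF assms(1)] by blast
    qed
    then show "y \<in> {0..<a}" by simp
  next
    fix y assume "y \<in> {0..<a}"
    then show "y \<in> {y \<in> {0..<a + b}. y \<noteq> x \<and> join_coloring a c1 c2 (Suc k) x y = Suc k}"
      using assms(2,3) by (simp add: join_coloring_def)
  qed
  then show ?thesis unfolding color_deg_def by simp
qed

lemma join_coloring_eq_new_iff:
  assumes "edge_coloring k a c1" "edge_coloring k b c2" "u < a + b" "v < a + b" "u \<noteq> v"
  shows "join_coloring a c1 c2 (Suc k) u v = Suc k \<longleftrightarrow> (u < a \<longleftrightarrow> a \<le> v)"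
proof (cases "u < a \<longleftrightarrow> a \<le> v")
  case False
  then consider "u < a" "v < a" | "a \<le> u" "a \<le> v" by linarith
  then show ?thesis
  proof cases
    case 1
    then show ?thesis using edge_coloring_neq_Suc[OF assms(1) 1 assms(5)] False
      by (simp add: join_coloring_def)
  next
    case 2
    then have "u - a < b" "v - a < b" "u - a \<noteq> v - a" using assms(3-5) by auto
    with 2 show ?thesis using edge_coloring_neq_Suc[OF assms(2)] False
      by (simp add: join_coloring_def)
  qed
qed (cases "u < a"; simp add: join_coloring_def)

lemma monotone_P3_free_join:
  assumes ec1: "edge_coloring k a c1" and ec2: "edge_coloring k b c2"
    and free1: "monotone_P3_free a c1" and free2: "monotone_P3_free b c2" and "a \<noteq> b"
  shows "monotone_P3_free (a + b) (join_coloring a c1 c2 (Suc k))"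
  unfolding monotone_P3_free_def
proof (intro allI impI notI)
  fix u v w
  let ?c = "join_coloring a c1 c2 (Suc k)"
  let ?j = "?c u v"
  let ?d = "color_deg (a + b) ?c ?j"
  assume range: "u < a + b" "v < a + b" "w < a + b"
    and distinct: "u \<noteq> v" "v \<noteq> w" "u \<noteq> w" and same: "?c u v = ?c v w"
    and sorted: "?d u \<le> ?d v \<and> ?d v \<le> ?d w"
  note new_iff = join_coloring_eq_new_iff[OF ec1 ec2]
  show False
  proof (cases "?j = Suc k")
    case True
    then have sides: "u < a \<longleftrightarrow> a \<le> v" "w < a \<longleftrightarrow> a \<le> v"
      using new_iff[of u v] new_iff[of v w] range distinct same by auto
    have new_left: "?d x = b" if "x < a" for x
      using color_deg_join_new_left[OF ec1 that] \<open>?j = Suc k\<close> by simp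
    have new_right: "?d x = a" if "a \<le> x" "x < a + b" for x
      using color_deg_join_new_right[OF ec2 that] \<open>?j = Suc k\<close> by simp
    show False
    proof (cases "v < a")
      case True
      then have "a \<le> u" "a \<le> w" using sides by auto
      then show False
        using sorted \<open>a \<noteq> b\<close> new_left[OF True] new_right \<open>u < a + b\<close> \<open>w < a + b\<close> by simp
    next
      case False
      then have "u < a" "w < a" using sides by auto
      then show False
        using sorted \<open>a \<noteq> b\<close> new_left new_right[of v] False \<open>v < a + b\<close> by simp
    qed
  next
    case False
    then have sides: "u < a \<longleftrightarrow> a > v" "w < a \<longleftrightarrow> a > v"
      using new_iff[of u v] new_iff[of v w] range distinct same by auto
    show False
    proof (cases "v < a")
      case True
      then have c1: "c1 u v = ?j" "c1 v w = ?j" and "u < a" "w < a"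
        using same sides by (auto simp: join_coloring_def)
      then have "color_deg a c1 (c1 u v) u \<le> color_deg a c1 (c1 u v) v"
        "color_deg a c1 (c1 u v) v \<le> color_deg a c1 (c1 u v) w"
        using sorted True color_deg_join_left[OF _ False] by simp_all
      moreover have "c1 u v = c1 v w" using c1 by simp
      ultimately show False
        using free1[unfolded monotone_P3_free_def, rule_format, OF \<open>u < a\<close> True \<open>w < a\<close> distinct]
        by simp
    next
      case v: False
      then have "a \<le> u" "a \<le> w" using sides by auto
      then have c2: "c2 (u - a) (v - a) = ?j" "c2 (v - a) (w - a) = ?j"
        and range': "u - a < b" "v - a < b" "w - a < b"
        and distinct': "u - a \<noteq> v - a" "v - a \<noteq> w - a" "u - a \<noteq> w - a"
        using v same range distinct by (auto simp: join_coloring_def)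
      have "color_deg b c2 ?j (u - a) \<le> color_deg b c2 ?j (v - a)"
        "color_deg b c2 ?j (v - a) \<le> color_deg b c2 ?j (w - a)"
        using sorted v \<open>a \<le> u\<close> \<open>a \<le> w\<close> color_deg_join_right[OF _ False] by (simp_all add: not_less)
      then show False
        using free2[unfolded monotone_P3_free_def, rule_format, OF range' distinct'] c2 by simp
    qed
  qed
qed

subsection \<open>Large colourings without monotone paths of order three\<close>

lemma monotone_P3_free_colorable_join:
  "monotone_P3_free_colorable k a \<Longrightarrow> monotone_P3_free_colorable k b \<Longrightarrow> a \<noteq> b \<Longrightarrow>
    monotone_P3_free_colorable (Suc k) (a + b)"
  unfolding monotone_P3_free_colorable_def using edge_coloring_join monotone_P3_free_join by blast

lemma monotone_P3_free_colorable_1: "n \<le> 2 \<Longrightarrow> monotone_P3_free_colorable 1 n"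
  unfolding monotone_P3_free_colorable_def monotone_P3_free_def edge_coloring_def
  by (rule exI[of _ "\<lambda>_ _. 1"]) auto

lemma monotone_P3_free_colorable_2: "n \<le> 3 \<Longrightarrow> monotone_P3_free_colorable 2 n"
proof (cases "n = 3")
  case True
  have "monotone_P3_free_colorable (Suc 1) (2 + 1)"
    by (intro monotone_P3_free_colorable_join monotone_P3_free_colorable_1) simp_all
  then show ?thesis using True by (simp add: numeral_eq_Suc)
next
  case False
  assume "n \<le> 3"
  with False have "monotone_P3_free_colorable 1 n" by (intro monotone_P3_free_colorable_1) simp
  then show ?thesis by (rule monotone_P3_free_colorable_mono) simp
qed

lemma all_less_iff_Ball_upt: "(\<forall>u<n. P u) \<longleftrightarrow> (\<forall>u\<in>set [0..<n]. P u)"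
  by auto

definition coloring_K6 :: "nat \<Rightarrow> nat \<Rightarrow> nat" where
  "coloring_K6 u v =
     [[1, 2, 1, 1, 3, 1], [2, 1, 1, 1, 1, 3], [1, 1, 1, 2, 3, 3],
      [1, 1, 2, 1, 3, 3], [3, 1, 3, 3, 1, 2], [1, 3, 3, 3, 2, 1]] ! u ! v"

definition coloring_K7 :: "nat \<Rightarrow> nat \<Rightarrow> nat" where
  "coloring_K7 u v =
     [[1, 2, 3, 3, 1, 1, 1], [2, 1, 3, 3, 1, 1, 1], [3, 3, 1, 1, 2, 2, 3], [3, 3, 1, 1, 2, 2, 3],
      [1, 1, 2, 2, 1, 3, 2], [1, 1, 2, 2, 3, 1, 2], [1, 1, 3, 3, 2, 2, 1]] ! u ! v"

lemma monotone_P3_free_colorable_3_6: "monotone_P3_free_colorable 3 6"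
proof -
  have "edge_coloring 3 6 coloring_K6 \<and> monotone_P3_free 6 coloring_K6"
    unfolding edge_coloring_def monotone_P3_free_def all_less_iff_Ball_upt coloring_K6_def
    by code_simp
  then show ?thesis unfolding monotone_P3_free_colorable_def by blast
qed

lemma monotone_P3_free_colorable_3_7: "monotone_P3_free_colorable 3 7"
proof -
  have "edge_coloring 3 7 coloring_K7 \<and> monotone_P3_free 7 coloring_K7"
    unfolding edge_coloring_def monotone_P3_free_def all_less_iff_Ball_upt coloring_K7_def
    by code_simp
  then show ?thesis unfolding monotone_P3_free_colorable_def by blast
qed

lemma monotone_P3_free_colorable_3: "n \<le> 7 \<Longrightarrow> monotone_P3_free_colorable 3 n"
proof -
  assume "n \<le> 7"
  then consider "n \<le> 3" | "n = 3 + 1" | "n = 3 + 2" | "n = 6" | "n = 7" by linarith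
  then show ?thesis
  proof cases
    case 1
    then show ?thesis
      using monotone_P3_free_colorable_mono[OF monotone_P3_free_colorable_2, of n 3] by simp
  next
    case 2
    then show ?thesis using monotone_P3_free_colorable_join[of 2 3 1] monotone_P3_free_colorable_2 by simp
  next
    case 3
    then show ?thesis using monotone_P3_free_colorable_join[of 2 3 2] monotone_P3_free_colorable_2 by simp
  qed (simp_all add: monotone_P3_free_colorable_3_6 monotone_P3_free_colorable_3_7)
qed

lemma monotone_P3_free_colorable_doubling:
  "n \<le> 6 * 2 ^ m + 1 \<Longrightarrow> monotone_P3_free_colorable (m + 3) n"
proof (induction m arbitrary: n)
  case 0
  then show ?case using monotone_P3_free_colorable_3 by simp
next
  case (Suc m)
  show ?case
  proof (cases "n \<le> 6 * 2 ^ m + 1")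
    case True
    then show ?thesis using Suc.IH monotone_P3_free_colorable_mono[of "m + 3" n] by simp
  next
    case False
    define a :: nat where "a = 6 * 2 ^ m + 1"
    have split: "n = a + (n - a)" "n - a < a" using False Suc.prems unfolding a_def by auto
    then have "monotone_P3_free_colorable (Suc (m + 3)) (a + (n - a))"
      using Suc.IH by (intro monotone_P3_free_colorable_join) (simp_all add: a_def)
    then show ?thesis using split(1) by simp
  qed
qed

theorem lemma3p7:
  fixes k M :: nat
  assumes "k \<ge> 3" and "admissible k 3 M"
  shows "real M \<ge> 3 / 4 * 2 ^ k + 2"
proof -
  define m where "m = k - 3"
  have k: "k = m + 3" using assms(1) unfolding m_def by simp
  have "6 * 2 ^ m + 1 < M"
    using admissible_gt_monotone_P3_free_colorable[OF assms(2)] monotone_P3_free_colorable_doubling k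
    by blast
  then have "real (6 * 2 ^ m + 2) \<le> real M" by linarith
  moreover have "3 / 4 * 2 ^ k + 2 = real (6 * 2 ^ m + 2)" by (simp add: k power_add)
  ultimately show ?thesis by linarith
qed

end
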